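(* Let $(X,\to,d_A)$ be a metric transition system over $A$, let $d_0\in\mathit{DPMet}(X)$, and define $\beta_{d_0}\colon\mathit{DPMet}(\mathcal P(X))\to\mathit{DPMet}(\mathcal P(X))$ by $\beta_{d_0}(d)=\beta_T(d)\vee(d_0)_{\overrightarrow H}$. Then for all $X_1,X_2\subseteq X$, the least fixpoint satisfies: $\mu\beta_{d_0}(X_1,X_2)$ is the infimum of those $\varepsilon\in[0,1]$ such that for all $x_1\in X_1$, all $x_1'$ and all $\sigma\in A^*$ with $x_1\xrightarrow{\sigma}x_1'$ there exist $x_2\in X_2$, $x_2'$ and $\tau\in A^*$ with $x_2\xrightarrow{\tau}x_2'$, $d_{\mathrm{Tr}}(\sigma,\tau)\le\varepsilon$ and $d_0(x_1',x_2')\le\varepsilon$.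
   Context: A metric transition system over $A$ is $(X,\to,d_A)$ with $\to\subseteq X\times A\times X$ and a metric $d_A\colon A\times A\to[0,1]$; $x\xrightarrow{\sigma}x'$ denotes a path labelled $\sigma$. $r\oplus s=\min\{r+s,1\}$, $r\ominus s=\max\{0,r-s\}$; $\bigvee\emptyset=0$, $\bigwedge\emptyset=1$. $\mathit{DPMet}(Y)$: directed pseudo-metrics $d\colon Y\times Y\to[0,1]$ ($d(y,y)=0$, $d(x,z)\le d(x,y)\oplus d(y,z)$), ordered pointwise; least fixpoints are taken in this lattice. $d_{\overrightarrow H}(U,V)=\bigvee_{u\in U}\bigwedge_{v\in V}d(u,v)$. $d_{\mathrm{Tr}}(\sigma_1,\sigma_2)=1$ if lengths differ, $d_{\mathrm{Tr}}(\varepsilon,\varepsilon)=0$, $d_{\mathrm{Tr}}(a_1\sigma_1',a_2\sigma_2')=\max\{d_A(a_1,a_2),d_{\mathrm{Tr}}(\sigma_1',\sigma_2')\}$. $\bigcirc_af(x)=\bigvee\{(1-d_A(b,a))\land f(x')\mid x\xrightarrow{b}x'\}$; $\tilde f(Y)=\bigvee_{x\in Y}f(x)$; $\alpha_T(\mathcal F)(X_1,X_2)=\bigvee_{f\in\mathcal F}(\tilde f(X_1)\ominus\tilde f(X_2))$; $\gamma_T(d)=\{f\in[0,1]^X\mid\forall X_1,X_2\colon\tilde f(X_1)\ominus\tilde f(X_2)\le d(X_1,X_2)\}$; $\mathit{lo}_T(\mathcal F)=\bigcup_{a\in A}\{\bigcirc_af\mid f\in\mathrm{cl}^{\mathrm{sh}}(\mathcal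 F)\}\cup\{1\}$ with $\mathrm{cl}^{\mathrm{sh}}$ the closure under shifts $f\mapsto f\ominus c$, $f\mapsto f\oplus c$; $\beta_T=\alpha_T\circ\mathit{lo}_T\circ\gamma_T$. *)

theory Defs
  imports Main "HOL.Real"
begin

definition oplus01 :: "real \<Rightarrow> real \<Rightarrow> real" where
  "oplus01 r s = min (r + s) 1"

definition ominus01 :: "real \<Rightarrow> real \<Rightarrow> real" where
  "ominus01 r s = max 0 (r - s)"

definition sup01 :: "real set \<Rightarrow> real" where
  "sup01 S = (if S = {} then 0 else Sup S)"

definition inf01 :: "real set \<Rightarrow> real" where
  "inf01 S = (if S = {} then 1 else Inf S)"

definition metric01 :: "('a \<Rightarrow> 'a \<Rightarrow> real) \<Rightarrow> bool" where
  "metric01 d \<longleftrightarrow> (\<forall>a b. 0 \<le> d a b \<and> d a b \<le> 1) \<and> (\<forall>a b. d a b = 0 \<longleftrightarrow> a = b)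
     \<and> (\<forall>a b. d a b = d b a) \<and> (\<forall>a b c. d a c \<le> oplus01 (d a b) (d b c))"

definition DPMet :: "('y \<Rightarrow> 'y \<Rightarrow> real) set" where
  "DPMet = {d. (\<forall>x y. 0 \<le> d x y \<and> d x y \<le> 1) \<and> (\<forall>y. d y y = 0)
              \<and> (\<forall>x y z. d x z \<le> oplus01 (d x y) (d y z))}"

definition dp_lfp :: "(('y \<Rightarrow> 'y \<Rightarrow> real) \<Rightarrow> ('y \<Rightarrow> 'y \<Rightarrow> real)) \<Rightarrow> 'y \<Rightarrow> 'y \<Rightarrow> real" where
  "dp_lfp F = (THE d. d \<in> DPMet \<and> F d = d \<and> (\<forall>d'\<in>DPMet. F d' = d' \<longrightarrow> d \<le> d'))"

inductive tpath :: "('x \<times> 'a \<times> 'x) set \<Rightarrow> 'x \<Rightarrow> 'a list \<Rightarrow> 'x \<Rightarrow> bool" for T where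
  tpath_nil: "tpath T x [] x"
| tpath_cons: "(x, a, y) \<in> T \<Longrightarrow> tpath T y \<sigma> z \<Longrightarrow> tpath T x (a # \<sigma>) z"

fun dTr :: "('a \<Rightarrow> 'a \<Rightarrow> real) \<Rightarrow> 'a list \<Rightarrow> 'a list \<Rightarrow> real" where
  "dTr dA [] [] = 0"
| "dTr dA (a # s) (b # t) = (if length s \<noteq> length t then 1 else max (dA a b) (dTr dA s t))"
| "dTr dA [] (b # t) = 1"
| "dTr dA (a # s) [] = 1"

definition hausdorff_dir :: "('x \<Rightarrow> 'x \<Rightarrow> real) \<Rightarrow> 'x set \<Rightarrow> 'x set \<Rightarrow> real" where
  "hausdorff_dir d U V = sup01 ((\<lambda>u. inf01 ((\<lambda>v. d u v) ` V)) ` U)"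

definition ftilde :: "('x \<Rightarrow> real) \<Rightarrow> 'x set \<Rightarrow> real" where
  "ftilde f Y = sup01 (f ` Y)"

definition alphaT :: "('x \<Rightarrow> real) set \<Rightarrow> 'x set \<Rightarrow> 'x set \<Rightarrow> real" where
  "alphaT F X1 X2 = sup01 ((\<lambda>f. ominus01 (ftilde f X1) (ftilde f X2)) ` F)"

definition gammaT :: "('x set \<Rightarrow> 'x set \<Rightarrow> real) \<Rightarrow> ('x \<Rightarrow> real) set" where
  "gammaT d = {f. (\<forall>x. 0 \<le> f x \<and> f x \<le> 1)
      \<and> (\<forall>X1 X2. ominus01 (ftilde f X1) (ftilde f X2) \<le> d X1 X2)}"

inductive_set clsh :: "('x \<Rightarrow> real) set \<Rightarrow> ('x \<Rightarrow> real) set" for F where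
  clsh_base: "f \<in> F \<Longrightarrow> f \<in> clsh F"
| clsh_minus: "f \<in> clsh F \<Longrightarrow> 0 \<le> c \<Longrightarrow> c \<le> 1 \<Longrightarrow> (\<lambda>x. ominus01 (f x) c) \<in> clsh F"
| clsh_plus: "f \<in> clsh F \<Longrightarrow> 0 \<le> c \<Longrightarrow> c \<le> 1 \<Longrightarrow> (\<lambda>x. oplus01 (f x) c) \<in> clsh F"

definition nextop :: "('x \<times> 'a \<times> 'x) set \<Rightarrow> ('a \<Rightarrow> 'a \<Rightarrow> real) \<Rightarrow> 'a \<Rightarrow> ('x \<Rightarrow> real) \<Rightarrow> 'x \<Rightarrow> real" where
  "nextop T dA a f x = sup01 {min (1 - dA b a) (f x') | b x'. (x, b, x') \<in> T}"

definition loT :: "('x \<times> 'a \<times> 'x) set \<Rightarrow> ('a \<Rightarrow> 'a \<Rightarrow> real) \<Rightarrow> ('x \<Rightarrow> real) set \<Rightarrow> ('x \<Rightarrow> real) set" where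
  "loT T dA F = (\<Union>a. {nextop T dA a f | f. f \<in> clsh F}) \<union> {\<lambda>_. 1}"

definition betaT :: "('x \<times> 'a \<times> 'x) set \<Rightarrow> ('a \<Rightarrow> 'a \<Rightarrow> real) \<Rightarrow> ('x set \<Rightarrow> 'x set \<Rightarrow> real) \<Rightarrow> 'x set \<Rightarrow> 'x set \<Rightarrow> real" where
  "betaT T dA d = alphaT (loT T dA (gammaT d))"

definition beta_d0 :: "('x \<times> 'a \<times> 'x) set \<Rightarrow> ('a \<Rightarrow> 'a \<Rightarrow> real) \<Rightarrow> ('x \<Rightarrow> 'x \<Rightarrow> real)
    \<Rightarrow> ('x set \<Rightarrow> 'x set \<Rightarrow> real) \<Rightarrow> 'x set \<Rightarrow> 'x set \<Rightarrow> real" where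
  "beta_d0 T dA d0 d = (\<lambda>X1 X2. max (betaT T dA d X1 X2) (hausdorff_dir d0 X1 X2))"

end

theory Submission
  imports Defs
begin

text \<open>Write \<open>\<delta>\<close> (\<open>trace_sim_dist\<close>) for the right-hand side.
  For \<open>\<epsilon> < 1\<close>, matching all paths amounts to matching the start states (the
  Hausdorff part of \<open>\<beta>\<^sub>d\<^sub>0\<close>) and, after each step \<open>x1 -a\<rightarrow> y\<close>, matching all paths
  from \<open>{y}\<close> by paths from the successors of \<open>X2\<close> along \<open>\<epsilon>\<close>-close labels. This makes \<open>\<delta>\<close>
  a fixpoint: in \<open>\<beta>\<^sub>T(\<delta>) \<ge> \<delta>\<close> the witness is the distance to those successors seen
  through the modality \<open>\<circle>\<^sub>a\<close>, and in \<open>\<beta>\<^sub>T(\<delta>) \<le> \<delta>\<close> every shift of a function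
  of \<open>\<gamma>\<^sub>T(\<delta>)\<close> grows by at most \<open>\<epsilon>\<close> along matched steps. Any fixpoint \<open>d\<close> is the
  supremum of its values on singletons and vanishes on \<open>X \<subseteq> W\<close>, so the same witness shows,
  by induction along a path, that \<open>d X1 X2 < \<epsilon>\<close> forces every path from \<open>X1\<close> to be
  \<open>\<epsilon>\<close>-matched; hence \<open>\<delta> \<le> d\<close>.\<close>

section \<open>Suprema and infima in the unit interval\<close>

lemma sup01_upper: "x \<in> S \<Longrightarrow> \<forall>s\<in>S. s \<le> B \<Longrightarrow> x \<le> sup01 S"
  unfolding sup01_def by (auto intro!: cSup_upper bdd_aboveI)

lemma sup01_least: "\<forall>s\<in>S. s \<le> c \<Longrightarrow> 0 \<le> c \<Longrightarrow> sup01 S \<le> c"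
  unfolding sup01_def by (auto intro!: cSup_least)

lemma sup01_bounds:
  assumes "\<forall>s\<in>S. 0 \<le> s \<and> s \<le> 1"
  shows "0 \<le> sup01 S \<and> sup01 S \<le> 1"
proof (cases "S = {}")
  case False
  then obtain x where "x \<in> S" by blast
  then have "0 \<le> Sup S" "Sup S \<le> 1"
    using False assms by (auto intro!: cSup_least order.trans[OF _ cSup_upper[of x S]] bdd_aboveI)
  then show ?thesis by (simp add: sup01_def)
qed (simp add: sup01_def)

lemma sup01_singleton [simp]: "sup01 {x} = x"
  by (simp add: sup01_def)

lemma less_sup01D: "s < sup01 S \<Longrightarrow> 0 \<le> s \<Longrightarrow> \<exists>x\<in>S. s < x"
  unfolding sup01_def by (auto split: if_splits intro: less_cSupD)

lemma inf01_lower: "x \<in> S \<Longrightarrow> \<forall>s\<in>S. 0 \<le> s \<Longrightarrow> inf01 S \<le> x"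
  unfolding inf01_def by (auto intro!: cInf_lower bdd_belowI)

lemma inf01_greatest: "\<forall>s\<in>S. c \<le> s \<Longrightarrow> c \<le> 1 \<Longrightarrow> c \<le> inf01 S"
  unfolding inf01_def by (auto intro!: cInf_greatest)

lemma inf01_bounds:
  assumes "\<forall>s\<in>S. 0 \<le> s \<and> s \<le> 1"
  shows "0 \<le> inf01 S \<and> inf01 S \<le> 1"
proof (cases "S = {}")
  case False
  then obtain x where "x \<in> S" by blast
  then have "0 \<le> Inf S" "Inf S \<le> 1"
    using False assms by (auto intro!: cInf_greatest order.trans[OF cInf_lower[of x S]] bdd_belowI)
  then show ?thesis by (simp add: inf01_def)
qed (simp add: inf01_def)

lemma inf01_lessD: "inf01 S < c \<Longrightarrow> c \<le> 1 \<Longrightarrow> \<exists>x\<in>S. x < c"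
  unfolding inf01_def by (auto split: if_splits intro: cInf_lessD)

abbreviation unit_valued :: "('x \<Rightarrow> real) \<Rightarrow> bool" where
  "unit_valued f \<equiv> \<forall>x. 0 \<le> f x \<and> f x \<le> 1"

lemma sup01_max_image:
  assumes "\<forall>z\<in>X. 0 \<le> f z \<and> f z \<le> 1" "\<forall>z\<in>X. 0 \<le> g z \<and> g z \<le> 1"
  shows "sup01 ((\<lambda>z. max (f z) (g z)) ` X) = max (sup01 (f ` X)) (sup01 (g ` X))"
proof (rule antisym)
  let ?F = "sup01 (f ` X)" and ?G = "sup01 (g ` X)"
  have "f z \<le> ?F" "g z \<le> ?G" if "z \<in> X" for z
    using that assms by (auto intro!: sup01_upper[where B = 1])
  then have "\<forall>s\<in>(\<lambda>z. max (f z) (g z)) ` X. s \<le> max ?F ?G"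
    by (blast intro: max.mono)
  moreover have "0 \<le> ?F"
    using assms sup01_bounds[of "f ` X"] by auto
  ultimately show "sup01 ((\<lambda>z. max (f z) (g z)) ` X) \<le> max ?F ?G"
    by (intro sup01_least) auto
  let ?S = "sup01 ((\<lambda>z. max (f z) (g z)) ` X)"
  have "max (f z) (g z) \<le> ?S" if "z \<in> X" for z
    using that assms by (intro sup01_upper[where B = 1]) auto
  moreover have "0 \<le> ?S"
    using assms sup01_bounds[of "(\<lambda>z. max (f z) (g z)) ` X"] by (auto simp: le_max_iff_disj)
  ultimately have "sup01 (f ` X) \<le> ?S" "sup01 (g ` X) \<le> ?S"
    by (auto intro!: sup01_least)
  then show "max (sup01 (f ` X)) (sup01 (g ` X)) \<le> ?S" by simp
qed

lemma ftilde_singleton [simp]: "ftilde f {y} = f y"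
  by (simp add: ftilde_def sup01_def)

lemma ftilde_upper: "y \<in> Y \<Longrightarrow> \<forall>x. f x \<le> 1 \<Longrightarrow> f y \<le> ftilde f Y"
  unfolding ftilde_def by (auto intro!: sup01_upper[where B = 1])

lemma ftilde_least: "\<forall>y\<in>Y. f y \<le> c \<Longrightarrow> 0 \<le> c \<Longrightarrow> ftilde f Y \<le> c"
  unfolding ftilde_def by (auto intro!: sup01_least)

lemma ftilde_bounds: "unit_valued f \<Longrightarrow> 0 \<le> ftilde f Y \<and> ftilde f Y \<le> 1"
  unfolding ftilde_def by (auto intro!: sup01_bounds)

lemma ftilde_mono: "X \<subseteq> Y \<Longrightarrow> unit_valued f \<Longrightarrow> ftilde f X \<le> ftilde f Y"
  using ftilde_bounds[of f Y] by (auto intro!: ftilde_least ftilde_upper)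

lemma ftilde_approx:
  assumes "Y \<noteq> {}" "unit_valued f" "0 < \<delta>"
  obtains z where "z \<in> Y" "ftilde f Y - \<delta> < f z"
proof (cases "ftilde f Y - \<delta> < 0")
  case True
  obtain z where "z \<in> Y" using assms(1) by blast
  moreover have "0 \<le> f z" using assms(2) by blast
  ultimately show ?thesis using True that by force
next
  case False
  then show ?thesis
    using less_sup01D[of "ftilde f Y - \<delta>" "f ` Y"] assms that by (auto simp: ftilde_def)
qed

lemma ftilde_comp_le:
  assumes mono: "mono \<phi>" and lip: "\<And>u t. 0 \<le> t \<Longrightarrow> \<phi> (u + t) \<le> \<phi> u + t"
    and "unit_valued f" "unit_valued (\<phi> \<circ> f)" "Y \<noteq> {}"
    and le: "f y \<le> ftilde f Y + e" "0 \<le> e"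
  shows "\<phi> (f y) \<le> ftilde (\<phi> \<circ> f) Y + e"
proof (rule field_le_epsilon)
  fix \<delta> :: real assume "0 < \<delta>"
  then obtain z where z: "z \<in> Y" "ftilde f Y - \<delta> < f z"
    using ftilde_approx assms by metis
  have "\<phi> (f y) \<le> \<phi> (f z + (e + \<delta>))"
    using z le by (intro monoD[OF mono]) simp
  also have "\<dots> \<le> \<phi> (f z) + (e + \<delta>)"
    using lip \<open>0 < \<delta>\<close> le by simp
  also have "\<phi> (f z) \<le> ftilde (\<phi> \<circ> f) Y"
    using z assms ftilde_upper[of z Y "\<phi> \<circ> f"] by simp
  finally show "\<phi> (f y) \<le> ftilde (\<phi> \<circ> f) Y + e + \<delta>" by simp
qed

lemma min_ftilde_le:
  assumes "\<forall>y\<in>Y. min c (h y) \<le> B" "0 \<le> B"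
  shows "min c (ftilde h Y) \<le> B"
proof (cases "c \<le> B")
  case False
  then have "\<forall>y\<in>Y. h y \<le> B" using assms(1) by (auto simp: min_def split: if_splits)
  then show ?thesis using ftilde_least assms(2) by fastforce
qed simp

lemma clsh_unit_valued: "h \<in> clsh G \<Longrightarrow> \<forall>g\<in>G. unit_valued g \<Longrightarrow> unit_valued h"
proof (induction rule: clsh.induct)
  case (clsh_base f)
  then show ?case by blast
next
  case (clsh_minus f c)
  then show ?case by (smt (verit) ominus01_def)
next
  case (clsh_plus f c)
  then show ?case by (smt (verit) oplus01_def)
qed

lemma clsh_le_ftilde:
  assumes "h \<in> clsh G" "\<forall>g\<in>G. unit_valued g" "\<forall>g\<in>G. g y \<le> ftilde g Y + e"
    and "Y \<noteq> {}" "0 \<le> e"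
  shows "h y \<le> ftilde h Y + e"
  using assms(1)
proof induction
  case (clsh_base f)
  then show ?case using assms(3) by blast
next
  case (clsh_minus f c)
  have "unit_valued f" "unit_valued (\<lambda>x. ominus01 (f x) c)"
    using clsh_minus clsh.clsh_minus clsh_unit_valued[OF _ assms(2)] by blast+
  then have "(\<lambda>u. ominus01 u c) (f y) \<le> ftilde ((\<lambda>u. ominus01 u c) \<circ> f) Y + e"
    using clsh_minus.IH assms(4,5)
    by (intro ftilde_comp_le) (auto simp: mono_def ominus01_def comp_def)
  then show ?case by (simp add: comp_def)
next
  case (clsh_plus f c)
  have "unit_valued f" "unit_valued (\<lambda>x. oplus01 (f x) c)"
    using clsh_plus clsh.clsh_plus clsh_unit_valued[OF _ assms(2)] by blast+
  then have "(\<lambda>u. oplus01 u c) (f y) \<le> ftilde ((\<lambda>u. oplus01 u c) \<circ> f) Y + e"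
    using clsh_plus.IH assms(4,5)
    by (intro ftilde_comp_le) (auto simp: mono_def oplus01_def comp_def)
  then show ?case by (simp add: comp_def)
qed

section \<open>Paths and the trace distance\<close>

lemma metric01D:
  assumes "metric01 dA"
  shows "0 \<le> dA a b" "dA a b \<le> 1" "dA a a = 0" "dA a b = dA b a" "dA a c \<le> dA a b + dA b c"
  using assms unfolding metric01_def oplus01_def by (auto simp: min_le_iff_disj)

lemma DPMetD:
  assumes "d \<in> DPMet"
  shows "0 \<le> d x y" "d x y \<le> 1" "d x x = 0" "d x z \<le> d x y + d y z"
  using assms unfolding DPMet_def oplus01_def by auto

lemma tpath_Nil_iff [simp]: "tpath T x [] y \<longleftrightarrow> y = x"
  by (auto elim: tpath.cases intro: tpath_nil)

lemma tpath_Cons_iff: "tpath T x (a # \<sigma>) z \<longleftrightarrow> (\<exists>y. (x, a, y) \<in> T \<and> tpath T y \<sigma> z)"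
  by (auto elim: tpath.cases intro: tpath_cons)

lemma dTr_length_neq: "length \<sigma> \<noteq> length \<tau> \<Longrightarrow> dTr dA \<sigma> \<tau> = 1"
  by (induction dA \<sigma> \<tau> rule: dTr.induct) auto

lemma dTr_Cons_le: "dA a b \<le> e \<Longrightarrow> dTr dA \<sigma> \<tau> \<le> e \<Longrightarrow> dTr dA (a # \<sigma>) (b # \<tau>) \<le> e"
  by (cases "length \<sigma> = length \<tau>") (auto simp: dTr_length_neq)

lemma dTr_Cons_leD: "dTr dA (a # \<sigma>) (b # \<tau>) \<le> e \<Longrightarrow> e < 1 \<Longrightarrow> dA a b \<le> e \<and> dTr dA \<sigma> \<tau> \<le> e"
  by (auto split: if_splits)

lemma dTr_Nil_leD: "dTr dA [] \<tau> \<le> e \<Longrightarrow> e < 1 \<Longrightarrow> \<tau> = []"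
  by (cases \<tau>) auto

context
  fixes dA :: "'a \<Rightarrow> 'a \<Rightarrow> real"
  assumes dA: "metric01 dA"
begin

lemma dTr_bounds: "0 \<le> dTr dA \<sigma> \<tau> \<and> dTr dA \<sigma> \<tau> \<le> 1"
proof (induction \<sigma> arbitrary: \<tau>)
  case Nil
  then show ?case by (cases \<tau>) auto
next
  case (Cons a \<sigma>)
  then show ?case using metric01D(1,2)[OF dA] by (cases \<tau>) (auto simp: le_max_iff_disj)
qed

lemma dTr_self [simp]: "dTr dA \<sigma> \<sigma> = 0"
  by (induction \<sigma>) (auto simp: metric01D[OF dA])

lemma dTr_triangle: "dTr dA \<sigma> \<rho> \<le> dTr dA \<sigma> \<tau> + dTr dA \<tau> \<rho>"
proof (cases "length \<sigma> = length \<tau> \<and> length \<tau> = length \<rho>")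
  case True
  then show ?thesis
  proof (induction \<sigma> arbitrary: \<tau> \<rho>)
    case (Cons a \<sigma>)
    then obtain b \<tau>' c \<rho>' where "\<tau> = b # \<tau>'" "\<rho> = c # \<rho>'"
      by (cases \<tau>; cases \<rho>) auto
    moreover have "dTr dA \<sigma> \<rho>' \<le> dTr dA \<sigma> \<tau>' + dTr dA \<tau>' \<rho>'"
      using Cons calculation by simp
    moreover have "dA a c \<le> dA a b + dA b c" "0 \<le> dA a b" "0 \<le> dA b c"
      using metric01D(1,5)[OF dA] by blast+
    moreover have "0 \<le> dTr dA \<sigma> \<tau>'" "0 \<le> dTr dA \<tau>' \<rho>'"
      using dTr_bounds by auto
    ultimately show ?case using Cons.prems by (auto simp: max_def)
  qed simp
next
  case False
  then have "dTr dA \<sigma> \<tau> = 1 \<or> dTr dA \<tau> \<rho> = 1" using dTr_length_neq by metis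
  then show ?thesis using dTr_bounds[of \<sigma> \<rho>] dTr_bounds[of \<sigma> \<tau>] dTr_bounds[of \<tau> \<rho>] by auto
qed

end

section \<open>The lifting functions\<close>

lemma ominus01_ftilde_bounds:
  "unit_valued f \<Longrightarrow> 0 \<le> ominus01 (ftilde f X1) (ftilde f X2) \<and> ominus01 (ftilde f X1) (ftilde f X2) \<le> 1"
  using ftilde_bounds[of f X1] ftilde_bounds[of f X2] by (auto simp: ominus01_def)

lemma alphaT_upper:
  "f \<in> F \<Longrightarrow> \<forall>f\<in>F. unit_valued f \<Longrightarrow> ominus01 (ftilde f X1) (ftilde f X2) \<le> alphaT F X1 X2"
  unfolding alphaT_def
  by (rule sup01_upper[where B = 1]) (auto simp: ominus01_ftilde_bounds)

lemma alphaT_least: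
  "\<forall>f\<in>F. ominus01 (ftilde f X1) (ftilde f X2) \<le> c \<Longrightarrow> 0 \<le> c \<Longrightarrow> alphaT F X1 X2 \<le> c"
  unfolding alphaT_def by (auto intro!: sup01_least)

lemma alphaT_bounds: "\<forall>f\<in>F. unit_valued f \<Longrightarrow> 0 \<le> alphaT F X1 X2 \<and> alphaT F X1 X2 \<le> 1"
  unfolding alphaT_def
  by (rule sup01_bounds) (auto simp: ominus01_ftilde_bounds)

lemma alphaT_mono_left:
  assumes "X \<subseteq> X'" "\<forall>f\<in>F. unit_valued f"
  shows "alphaT F X W \<le> alphaT F X' W"
proof (rule alphaT_least)
  show "0 \<le> alphaT F X' W" using alphaT_bounds[OF assms(2)] by blast
  show "\<forall>f\<in>F. ominus01 (ftilde f X) (ftilde f W) \<le> alphaT F X' W"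
  proof
    fix f assume f: "f \<in> F"
    have "ftilde f X \<le> ftilde f X'" using ftilde_mono[OF assms(1)] f assms(2) by blast
    then have "ominus01 (ftilde f X) (ftilde f W) \<le> ominus01 (ftilde f X') (ftilde f W)"
      by (auto simp: ominus01_def)
    also have "\<dots> \<le> alphaT F X' W" using alphaT_upper[OF f assms(2)] .
    finally show "ominus01 (ftilde f X) (ftilde f W) \<le> alphaT F X' W" .
  qed
qed

lemma alphaT_eq_sup_singletons:
  assumes F: "\<forall>f\<in>F. unit_valued f"
  shows "alphaT F X W = sup01 ((\<lambda>z. alphaT F {z} W) ` X)"
proof (rule antisym)
  let ?R = "sup01 ((\<lambda>z. alphaT F {z} W) ` X)"
  have R: "0 \<le> ?R" using alphaT_bounds[OF F] by (intro conjunct1[OF sup01_bounds]) auto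
  have "ftilde f X \<le> ?R + ftilde f W" if f: "f \<in> F" for f
  proof (rule ftilde_least)
    show "0 \<le> ?R + ftilde f W" using R ftilde_bounds[of f W] f F by simp
    show "\<forall>z\<in>X. f z \<le> ?R + ftilde f W"
    proof
      fix z assume z: "z \<in> X"
      have "ominus01 (ftilde f {z}) (ftilde f W) \<le> alphaT F {z} W" using alphaT_upper[OF f F] .
      also have "\<dots> \<le> ?R" using z alphaT_bounds[OF F] by (intro sup01_upper[where B = 1]) auto
      finally show "f z \<le> ?R + ftilde f W" by (simp add: ominus01_def)
    qed
  qed
  then show "alphaT F X W \<le> ?R"
    using R by (intro alphaT_least) (fastforce simp: ominus01_def)
  show "?R \<le> alphaT F X W"
    using alphaT_mono_left[OF _ F] alphaT_bounds[OF F] by (intro sup01_least) auto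
qed

lemma alphaT_subset_eq_0:
  assumes "X \<subseteq> W" "\<forall>f\<in>F. unit_valued f"
  shows "alphaT F X W = 0"
proof -
  have "\<forall>f\<in>F. ominus01 (ftilde f X) (ftilde f W) \<le> 0"
    using ftilde_mono[OF assms(1)] assms(2) by (simp add: ominus01_def)
  then show ?thesis using alphaT_least alphaT_bounds[OF assms(2)] by (metis antisym order_refl)
qed

lemma hausdorff_dir_singleton [simp]: "hausdorff_dir d {u} V = inf01 ((\<lambda>v. d u v) ` V)"
  by (simp add: hausdorff_dir_def)

lemma hausdorff_dir_eq_sup_singletons: "hausdorff_dir d X W = sup01 ((\<lambda>z. hausdorff_dir d {z} W) ` X)"
  by (simp add: hausdorff_dir_def)

context
  fixes d :: "'x \<Rightarrow> 'x \<Rightarrow> real"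
  assumes d: "d \<in> DPMet"
begin

lemma inf01_dist_bounds: "0 \<le> inf01 ((\<lambda>v. d u v) ` V) \<and> inf01 ((\<lambda>v. d u v) ` V) \<le> 1"
  using DPMetD(1,2)[OF d] by (auto intro!: inf01_bounds)

lemma hausdorff_dir_upper: "u \<in> U \<Longrightarrow> inf01 ((\<lambda>v. d u v) ` V) \<le> hausdorff_dir d U V"
  unfolding hausdorff_dir_def using inf01_dist_bounds by (intro sup01_upper[where B = 1]) auto

lemma hausdorff_dir_bounds: "0 \<le> hausdorff_dir d U V \<and> hausdorff_dir d U V \<le> 1"
  unfolding hausdorff_dir_def using inf01_dist_bounds by (auto intro!: sup01_bounds)

lemma hausdorff_dir_subset_eq_0:
  assumes "X \<subseteq> W"
  shows "hausdorff_dir d X W = 0"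
proof -
  have "inf01 ((\<lambda>v. d u v) ` W) \<le> 0" if "u \<in> X" for u
    using inf01_lower[of "d u u" "(\<lambda>v. d u v) ` W"] that assms DPMetD(1,3)[OF d] by fastforce
  then show ?thesis
    using hausdorff_dir_bounds[of X W] unfolding hausdorff_dir_def by (auto intro: antisym sup01_least)
qed

end

lemma dp_lfp_eqI:
  assumes "d \<in> DPMet" "F d = d" "\<And>d'. d' \<in> DPMet \<Longrightarrow> F d' = d' \<Longrightarrow> d \<le> d'"
  shows "dp_lfp F = d"
  unfolding dp_lfp_def
proof (rule the_equality)
  show "d \<in> DPMet \<and> F d = d \<and> (\<forall>d'\<in>DPMet. F d' = d' \<longrightarrow> d \<le> d')" using assms by blast
  fix d' assume "d' \<in> DPMet \<and> F d' = d' \<and> (\<forall>d''\<in>DPMet. F d'' = d'' \<longrightarrow> d' \<le> d'')"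
  then show "d' = d" using assms by (blast intro: antisym)
qed

section \<open>Trace simulation distance\<close>

definition trace_sim ::
    "('x \<times> 'a \<times> 'x) set \<Rightarrow> ('a \<Rightarrow> 'a \<Rightarrow> real) \<Rightarrow> ('x \<Rightarrow> 'x \<Rightarrow> real) \<Rightarrow> 'x set \<Rightarrow> 'x set \<Rightarrow> real \<Rightarrow> bool"
  where "trace_sim T dA d0 X1 X2 e \<longleftrightarrow> (\<forall>x1\<in>X1. \<forall>x1' \<sigma>. tpath T x1 \<sigma> x1' \<longrightarrow>
    (\<exists>x2\<in>X2. \<exists>x2' \<tau>. tpath T x2 \<tau> x2' \<and> dTr dA \<sigma> \<tau> \<le> e \<and> d0 x1' x2' \<le> e))"

definition trace_sim_dist ::
    "('x \<times> 'a \<times> 'x) set \<Rightarrow> ('a \<Rightarrow> 'a \<Rightarrow> real) \<Rightarrow> ('x \<Rightarrow> 'x \<Rightarrow> real) \<Rightarrow> 'x set \<Rightarrow> 'x set \<Rightarrow> real"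
  where "trace_sim_dist T dA d0 X1 X2 = inf01 {e. 0 \<le> e \<and> e \<le> 1 \<and> trace_sim T dA d0 X1 X2 e}"

definition near_succ :: "('x \<times> 'a \<times> 'x) set \<Rightarrow> ('a \<Rightarrow> 'a \<Rightarrow> real) \<Rightarrow> 'x set \<Rightarrow> 'a \<Rightarrow> real \<Rightarrow> 'x set"
  where "near_succ T dA X a e = {y. \<exists>x\<in>X. \<exists>b. (x, b, y) \<in> T \<and> dA a b \<le> e}"

lemma trace_sim_mono: "trace_sim T dA d0 X1 X2 e \<Longrightarrow> e \<le> e' \<Longrightarrow> trace_sim T dA d0 X1 X2 e'"
  unfolding trace_sim_def by (meson order_trans)

lemma trace_sim_iff_singletons: "trace_sim T dA d0 X W e \<longleftrightarrow> (\<forall>z\<in>X. trace_sim T dA d0 {z} W e)"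
  unfolding trace_sim_def by blast

lemma near_succ_tpath_Cons:
  assumes "y \<in> near_succ T dA X a e" "tpath T y \<tau> x'" "dTr dA \<sigma> \<tau> \<le> e"
  shows "\<exists>x\<in>X. \<exists>\<tau>'. tpath T x \<tau>' x' \<and> dTr dA (a # \<sigma>) \<tau>' \<le> e"
proof -
  obtain x b where "x \<in> X" "(x, b, y) \<in> T" "dA a b \<le> e"
    using assms(1) unfolding near_succ_def by blast
  then show ?thesis using assms(2,3) by (blast intro: tpath_cons dTr_Cons_le)
qed

lemma trace_sim_init:
  assumes "trace_sim T dA d0 X1 X2 e" "e < 1" "x1 \<in> X1"
  shows "\<exists>x2\<in>X2. d0 x1 x2 \<le> e"
  using assms dTr_Nil_leD[OF _ assms(2)] unfolding trace_sim_def by (metis tpath_Nil_iff tpath_nil)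

text \<open>Below distance \<open>1\<close> matched traces have equal length, so the first step of a path
  from \<open>X1\<close> must be matched by a step out of \<open>X2\<close> with an \<open>e\<close>-close label.\<close>
lemma trace_sim_step:
  assumes sim: "trace_sim T dA d0 X1 X2 e" and "e < 1" "x1 \<in> X1" "(x1, a, y) \<in> T"
  shows "trace_sim T dA d0 {y} (near_succ T dA X2 a e) e"
  unfolding trace_sim_def
proof (intro ballI allI impI)
  fix z x1' \<sigma> assume "z \<in> {y}" "tpath T z \<sigma> x1'"
  then have "tpath T x1 (a # \<sigma>) x1'" using assms(4) by (auto intro: tpath_cons)
  then obtain x2 x2' \<tau> where x2: "x2 \<in> X2" "tpath T x2 \<tau> x2'" "dTr dA (a # \<sigma>) \<tau> \<le> e" "d0 x1' x2' \<le> e"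
    using sim assms(3) unfolding trace_sim_def by blast
  then obtain b \<tau>' where \<tau>: "\<tau> = b # \<tau>'"
    using assms(2) by (cases \<tau>) auto
  then obtain y2 where "(x2, b, y2) \<in> T" "tpath T y2 \<tau>' x2'"
    using x2(2) tpath_Cons_iff by metis
  moreover have "dA a b \<le> e \<and> dTr dA \<sigma> \<tau>' \<le> e"
    using dTr_Cons_leD[of dA a \<sigma> b \<tau>' e] x2(3) \<tau> assms(2) by simp
  ultimately show "\<exists>x2\<in>near_succ T dA X2 a e. \<exists>x2' \<tau>. tpath T x2 \<tau> x2' \<and> dTr dA \<sigma> \<tau> \<le> e \<and> d0 x1' x2' \<le> e"
    using x2(1,4) unfolding near_succ_def by blast
qed

lemma trace_simI:
  assumes "0 \<le> e" and init: "\<And>x1. x1 \<in> X1 \<Longrightarrow> \<exists>x2\<in>X2. d0 x1 x2 \<le> e"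
    and step: "\<And>x1 a y. x1 \<in> X1 \<Longrightarrow> (x1, a, y) \<in> T \<Longrightarrow> trace_sim T dA d0 {y} (near_succ T dA X2 a e) e"
  shows "trace_sim T dA d0 X1 X2 e"
  unfolding trace_sim_def
proof (intro ballI allI impI)
  fix x1 x1' \<sigma> assume x1: "x1 \<in> X1" and path: "tpath T x1 \<sigma> x1'"
  show "\<exists>x2\<in>X2. \<exists>x2' \<tau>. tpath T x2 \<tau> x2' \<and> dTr dA \<sigma> \<tau> \<le> e \<and> d0 x1' x2' \<le> e"
  proof (cases \<sigma>)
    case Nil
    then show ?thesis using init x1 path assms(1) by (metis dTr.simps(1) tpath_Nil_iff)
  next
    case (Cons a \<sigma>')
    then obtain y where "(x1, a, y) \<in> T" "tpath T y \<sigma>' x1'"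
      using path tpath_Cons_iff by metis
    then obtain y2 x2' \<tau>' where "y2 \<in> near_succ T dA X2 a e" "tpath T y2 \<tau>' x2'"
        "dTr dA \<sigma>' \<tau>' \<le> e" "d0 x1' x2' \<le> e"
      using step x1 unfolding trace_sim_def by blast
    then show ?thesis using near_succ_tpath_Cons Cons by metis
  qed
qed

lemma trace_sim_dist_bounds: "0 \<le> trace_sim_dist T dA d0 X1 X2 \<and> trace_sim_dist T dA d0 X1 X2 \<le> 1"
  unfolding trace_sim_dist_def by (rule inf01_bounds) auto

lemma trace_sim_dist_le: "trace_sim T dA d0 X1 X2 e \<Longrightarrow> 0 \<le> e \<Longrightarrow> e \<le> 1 \<Longrightarrow> trace_sim_dist T dA d0 X1 X2 \<le> e"
  unfolding trace_sim_dist_def by (auto intro!: inf01_lower)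

lemma trace_sim_dist_less: "trace_sim_dist T dA d0 X1 X2 < e \<Longrightarrow> e \<le> 1 \<Longrightarrow> trace_sim T dA d0 X1 X2 e"
  unfolding trace_sim_dist_def by (auto dest!: inf01_lessD intro: trace_sim_mono)

lemma trace_sim_dist_greatest:
  assumes "\<And>e. 0 \<le> e \<Longrightarrow> e < 1 \<Longrightarrow> trace_sim T dA d0 X1 X2 e \<Longrightarrow> c \<le> e" "c \<le> 1"
  shows "c \<le> trace_sim_dist T dA d0 X1 X2"
  unfolding trace_sim_dist_def
proof (rule inf01_greatest[OF _ assms(2)])
  show "\<forall>e\<in>{e. 0 \<le> e \<and> e \<le> 1 \<and> trace_sim T dA d0 X1 X2 e}. c \<le> e"
    using assms by (force simp: order_le_less)
qed

lemma trace_sim_dist_le_approx: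
  assumes "\<And>e. m < e \<Longrightarrow> e < 1 \<Longrightarrow> trace_sim T dA d0 X1 X2 e" "0 \<le> m"
  shows "trace_sim_dist T dA d0 X1 X2 \<le> m"
proof (rule ccontr)
  let ?D = "trace_sim_dist T dA d0 X1 X2"
  assume "\<not> ?D \<le> m"
  then have "trace_sim T dA d0 X1 X2 ((m + ?D) / 2)"
    using assms(1) trace_sim_dist_bounds[of T dA d0 X1 X2] by simp
  then have "?D \<le> (m + ?D) / 2"
    using \<open>\<not> ?D \<le> m\<close> assms(2) trace_sim_dist_bounds[of T dA d0 X1 X2] by (intro trace_sim_dist_le) auto
  then show False using \<open>\<not> ?D \<le> m\<close> by simp
qed

lemma trace_sim_dist_mono:
  "(\<And>e. trace_sim T dA d0 X W e \<Longrightarrow> trace_sim T dA d0 X' W' e) \<Longrightarrow> trace_sim_dist T dA d0 X' W' \<le> trace_sim_dist T dA d0 X W"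
  by (rule trace_sim_dist_greatest) (auto intro: trace_sim_dist_le simp: trace_sim_dist_bounds)

lemma trace_sim_dist_eq_sup_singletons:
  "trace_sim_dist T dA d0 X W = sup01 ((\<lambda>z. trace_sim_dist T dA d0 {z} W) ` X)"
proof (rule antisym)
  let ?R = "sup01 ((\<lambda>z. trace_sim_dist T dA d0 {z} W) ` X)"
  have R: "0 \<le> ?R" "\<And>z. z \<in> X \<Longrightarrow> trace_sim_dist T dA d0 {z} W \<le> ?R"
    using trace_sim_dist_bounds[of T dA d0 _ W] sup01_bounds[of "(\<lambda>z. trace_sim_dist T dA d0 {z} W) ` X"]
    by (auto intro!: sup01_upper[where B = 1])
  show "trace_sim_dist T dA d0 X W \<le> ?R"
  proof (rule trace_sim_dist_le_approx[OF _ R(1)])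
    fix e assume "?R < e" "e < 1"
    then show "trace_sim T dA d0 X W e"
      using R(2) unfolding trace_sim_iff_singletons[of _ _ _ X]
      by (meson le_less_trans less_imp_le trace_sim_dist_less)
  qed
  show "?R \<le> trace_sim_dist T dA d0 X W"
    using trace_sim_dist_bounds[of T dA d0 X W]
    by (intro sup01_least) (auto intro!: trace_sim_dist_mono simp: trace_sim_iff_singletons[of _ _ _ X])
qed

lemma nextop_upper: "(x, b, y) \<in> T \<Longrightarrow> \<forall>z. h z \<le> 1 \<Longrightarrow> min (1 - dA b a) (h y) \<le> nextop T dA a h x"
  unfolding nextop_def by (rule sup01_upper[where B = 1]) (auto simp: min_le_iff_disj)

lemma nextop_least:
  "(\<And>b y. (x, b, y) \<in> T \<Longrightarrow> min (1 - dA b a) (h y) \<le> c) \<Longrightarrow> 0 \<le> c \<Longrightarrow> nextop T dA a h x \<le> c"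
  unfolding nextop_def by (rule sup01_least) auto

lemma gammaT_singleton_le:
  assumes "g \<in> gammaT d"
  shows "g y \<le> ftilde g Y + d {y} Y"
proof -
  have "ominus01 (ftilde g {y}) (ftilde g Y) \<le> d {y} Y"
    using assms unfolding gammaT_def by blast
  then show ?thesis by (simp add: ominus01_def)
qed

lemma dist_to_set_in_gammaT:
  assumes d: "d \<in> DPMet" and dec: "\<And>X. d X W = sup01 ((\<lambda>z. d {z} W) ` X)"
  shows "(\<lambda>z. d {z} W) \<in> gammaT d"
proof -
  have "ftilde (\<lambda>z. d {z} W) X = d X W" for X
    unfolding ftilde_def by (rule dec[symmetric])
  moreover have "ominus01 (d X1 W) (d X2 W) \<le> d X1 X2" for X1 X2
    using DPMetD(1)[OF d, of X1 X2] DPMetD(4)[OF d, where x = X1 and y = X2 and z = W] by (simp add: ominus01_def)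
  ultimately show ?thesis
    using DPMetD(1,2)[OF d] by (simp add: gammaT_def)
qed

section \<open>The fixpoint\<close>

locale metric_ts =
  fixes T :: "('x \<times> 'a \<times> 'x) set" and dA :: "'a \<Rightarrow> 'a \<Rightarrow> real" and d0 :: "'x \<Rightarrow> 'x \<Rightarrow> real"
  assumes dA: "metric01 dA" and d0: "d0 \<in> DPMet"
begin

lemma trace_sim_subset: "X \<subseteq> W \<Longrightarrow> trace_sim T dA d0 X W 0"
  unfolding trace_sim_def using dTr_self[OF dA] DPMetD(3)[OF d0] by fastforce

lemma trace_sim_trans:
  assumes "trace_sim T dA d0 X Y e1" "trace_sim T dA d0 Y Z e2"
  shows "trace_sim T dA d0 X Z (e1 + e2)"
  unfolding trace_sim_def
proof (intro ballI allI impI)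
  fix x x' \<sigma> assume "x \<in> X" "tpath T x \<sigma> x'"
  then obtain y y' \<rho> where y: "y \<in> Y" "tpath T y \<rho> y'" "dTr dA \<sigma> \<rho> \<le> e1" "d0 x' y' \<le> e1"
    using assms(1) unfolding trace_sim_def by blast
  then obtain z z' \<tau> where z: "z \<in> Z" "tpath T z \<tau> z'" "dTr dA \<rho> \<tau> \<le> e2" "d0 y' z' \<le> e2"
    using assms(2) unfolding trace_sim_def by blast
  have "dTr dA \<sigma> \<tau> \<le> e1 + e2" using dTr_triangle[OF dA, where \<sigma> = \<sigma> and \<tau> = \<rho> and \<rho> = \<tau>] y z by linarith
  moreover have "d0 x' z' \<le> e1 + e2" using DPMetD(4)[OF d0, where x = x' and y = y' and z = z'] y z by linarith
  ultimately show "\<exists>z\<in>Z. \<exists>z' \<tau>. tpath T z \<tau> z' \<and> dTr dA \<sigma> \<tau> \<le> e1 + e2 \<and> d0 x' z' \<le> e1 + e2"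
    using z by blast
qed

lemma trace_sim_dist_subset_eq_0:
  assumes "X \<subseteq> W"
  shows "trace_sim_dist T dA d0 X W = 0"
proof -
  have "trace_sim_dist T dA d0 X W \<le> 0"
    by (rule trace_sim_dist_le[OF trace_sim_subset[OF assms]]) simp_all
  then show ?thesis using trace_sim_dist_bounds[of T dA d0 X W] by simp
qed

lemma trace_sim_dist_DPMet: "trace_sim_dist T dA d0 \<in> DPMet"
  unfolding DPMet_def
proof (intro CollectI conjI allI)
  fix X Y Z
  let ?a = "trace_sim_dist T dA d0 X Y" and ?b = "trace_sim_dist T dA d0 Y Z"
  have ab: "0 \<le> ?a" "0 \<le> ?b" using trace_sim_dist_bounds by blast+
  have "trace_sim_dist T dA d0 X Z \<le> ?a + ?b"
  proof (rule trace_sim_dist_le_approx)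
    fix e assume e: "?a + ?b < e" "e < 1"
    define e1 where "e1 = ?a + (e - ?a - ?b) / 2"
    have "?a < e1" "e1 \<le> 1" "?b < e - e1" "e - e1 \<le> 1"
      using e ab by (simp_all add: e1_def field_simps)
    then have "trace_sim T dA d0 X Y e1" "trace_sim T dA d0 Y Z (e - e1)"
      by (auto intro: trace_sim_dist_less)
    then show "trace_sim T dA d0 X Z e" using trace_sim_trans by fastforce
  qed (use ab in simp)
  then show "trace_sim_dist T dA d0 X Z \<le> oplus01 ?a ?b"
    using trace_sim_dist_bounds[of T dA d0 X Z] by (simp add: oplus01_def)
qed (auto simp: trace_sim_dist_bounds trace_sim_dist_subset_eq_0)

lemma nextop_unit_valued:
  assumes "unit_valued h"
  shows "unit_valued (nextop T dA a h)"
proof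
  fix x
  have "0 \<le> min (1 - dA b a) (h y) \<and> min (1 - dA b a) (h y) \<le> 1" for b y
    using assms metric01D(2)[OF dA, of b a] by (simp add: min_le_iff_disj)
  then show "0 \<le> nextop T dA a h x \<and> nextop T dA a h x \<le> 1"
    unfolding nextop_def by (intro sup01_bounds) blast
qed

lemma loT_unit_valued: "\<forall>f\<in>loT T dA (gammaT d). unit_valued f"
proof
  fix f assume "f \<in> loT T dA (gammaT d)"
  then consider "f = (\<lambda>_. 1)" | a h where "f = nextop T dA a h" "h \<in> clsh (gammaT d)"
    unfolding loT_def by blast
  then show "unit_valued f"
  proof cases
    case 2
    have "\<forall>g\<in>gammaT d. unit_valued g" unfolding gammaT_def by blast
    then show ?thesis using 2 clsh_unit_valued nextop_unit_valued by blast
  qed simp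
qed

lemma beta_d0_bounds: "0 \<le> beta_d0 T dA d0 d X W \<and> beta_d0 T dA d0 d X W \<le> 1"
  using alphaT_bounds[OF loT_unit_valued] hausdorff_dir_bounds[OF d0]
  unfolding beta_d0_def betaT_def by (simp add: le_max_iff_disj)

lemma beta_d0_eq_sup_singletons: "beta_d0 T dA d0 d X W = sup01 ((\<lambda>z. beta_d0 T dA d0 d {z} W) ` X)"
proof -
  let ?F = "loT T dA (gammaT d)"
  have "beta_d0 T dA d0 d X W = max (alphaT ?F X W) (hausdorff_dir d0 X W)"
    by (simp add: beta_d0_def betaT_def)
  also have "\<dots> = max (sup01 ((\<lambda>z. alphaT ?F {z} W) ` X)) (sup01 ((\<lambda>z. hausdorff_dir d0 {z} W) ` X))"
    using alphaT_eq_sup_singletons[OF loT_unit_valued] hausdorff_dir_eq_sup_singletons by metis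
  also have "\<dots> = sup01 ((\<lambda>z. max (alphaT ?F {z} W) (hausdorff_dir d0 {z} W)) ` X)"
    using alphaT_bounds[OF loT_unit_valued] inf01_dist_bounds[OF d0]
    by (intro sup01_max_image[symmetric]) auto
  finally show ?thesis by (simp add: beta_d0_def betaT_def)
qed

lemma beta_d0_subset_eq_0: "X \<subseteq> W \<Longrightarrow> beta_d0 T dA d0 d X W = 0"
  by (simp add: beta_d0_def betaT_def alphaT_subset_eq_0[OF _ loT_unit_valued]
      hausdorff_dir_subset_eq_0[OF d0])

text \<open>The witness in \<open>gammaT d\<close> is the distance to the successors of \<open>X2\<close> whose label is
  \<open>e\<close>-close to \<open>a\<close>, shifted up by \<open>1 - e\<close> and observed one step ahead.\<close>
lemma betaT_ge_near_succ:
  assumes d: "d \<in> DPMet" and dec: "\<And>X W. d X W = sup01 ((\<lambda>z. d {z} W) ` X)"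
    and sub0: "\<And>X W. X \<subseteq> W \<Longrightarrow> d X W = 0"
    and "x1 \<in> X1" "(x1, a, y) \<in> T" "0 < e" "e \<le> 1"
  shows "min e (d {y} (near_succ T dA X2 a e)) \<le> betaT T dA d X1 X2"
proof -
  define W where "W = near_succ T dA X2 a e"
  define h where "h = (\<lambda>z. oplus01 (d {z} W) (1 - e))"
  define g where "g = nextop T dA a h"
  have "h \<in> clsh (gammaT d)"
    unfolding h_def using assms(6,7) dist_to_set_in_gammaT[OF d dec] by (intro clsh_plus clsh_base) auto
  then have g: "g \<in> loT T dA (gammaT d)" and h: "unit_valued h"
    using clsh_unit_valued[of h "gammaT d"] unfolding g_def loT_def gammaT_def by blast+
  have "h y = min (1 - dA a a) (h y)"
    using h metric01D(3)[OF dA] by simp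
  also have "\<dots> \<le> g x1"
    unfolding g_def using assms(5) h by (intro nextop_upper) auto
  also have "\<dots> \<le> ftilde g X1"
    using assms(4) g loT_unit_valued by (intro ftilde_upper) auto
  finally have g1: "h y \<le> ftilde g X1" .
  have "g x2 \<le> 1 - e" if "x2 \<in> X2" for x2
    unfolding g_def
  proof (rule nextop_least)
    fix b y2 assume tr: "(x2, b, y2) \<in> T"
    show "min (1 - dA b a) (h y2) \<le> 1 - e"
    proof (cases "dA a b \<le> e")
      case True
      then have "y2 \<in> W" using that tr unfolding W_def near_succ_def by blast
      then show ?thesis using sub0[of "{y2}" W] assms(6) by (simp add: h_def oplus01_def)
    next
      case False
      then show ?thesis using metric01D(4)[OF dA, of a b] by simp
    qed
  qed (use assms(7) in simp)
  then have g2: "ftilde g X2 \<le> 1 - e"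
    using assms(7) by (intro ftilde_least) auto
  have "min e (d {y} W) \<le> ominus01 (ftilde g X1) (ftilde g X2)"
    using g1 g2 unfolding h_def oplus01_def ominus01_def by auto
  also have "\<dots> \<le> betaT T dA d X1 X2"
    unfolding betaT_def using g loT_unit_valued by (rule alphaT_upper)
  finally show ?thesis unfolding W_def .
qed

lemma nextop_near_succ_le:
  assumes h: "unit_valued h" and hy: "h y \<le> ftilde h (near_succ T dA X2 b e) + e" and "0 \<le> e"
  shows "min (1 - dA b a) (h y) \<le> ftilde (nextop T dA a h) X2 + e"
proof -
  let ?f = "nextop T dA a h" and ?Y = "near_succ T dA X2 b e"
  define c where "c = 1 - dA b a - e"
  have "min c (h y2) \<le> ftilde ?f X2" if y2: "y2 \<in> ?Y" for y2
  proof -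
    obtain x2 b' where x2: "x2 \<in> X2" "(x2, b', y2) \<in> T" "dA b b' \<le> e"
      using y2 unfolding near_succ_def by blast
    have "dA b' a \<le> dA b' b + dA b a" by (rule metric01D(5)[OF dA])
    then have "c \<le> 1 - dA b' a" using x2(3) metric01D(4)[OF dA, of b b'] unfolding c_def by simp
    then have "min c (h y2) \<le> min (1 - dA b' a) (h y2)" by simp
    also have "\<dots> \<le> ?f x2" using x2(2) h by (intro nextop_upper) auto
    also have "\<dots> \<le> ftilde ?f X2" using x2(1) nextop_unit_valued[OF h] by (intro ftilde_upper) auto
    finally show ?thesis .
  qed
  then have "min c (ftilde h ?Y) \<le> ftilde ?f X2"
    using ftilde_bounds[OF nextop_unit_valued[OF h]] by (intro min_ftilde_le) auto
  then show ?thesis using hy unfolding c_def by linarith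
qed

lemma clsh_gammaT_le_near_succ:
  assumes h: "h \<in> clsh (gammaT (trace_sim_dist T dA d0))"
    and sim: "trace_sim T dA d0 X1 X2 e" and e: "0 \<le> e" "e < 1"
    and "x1 \<in> X1" "(x1, b, y) \<in> T"
  shows "h y \<le> ftilde h (near_succ T dA X2 b e) + e"
proof -
  let ?D = "trace_sim_dist T dA d0" and ?Y = "near_succ T dA X2 b e"
  have sim_y: "trace_sim T dA d0 {y} ?Y e" using trace_sim_step[OF sim e(2) assms(5,6)] .
  then have "?Y \<noteq> {}" using trace_sim_init[OF sim_y e(2), of y] by blast
  have "?D {y} ?Y \<le> e" using trace_sim_dist_le[OF sim_y] e by simp
  then have "g y \<le> ftilde g ?Y + e" if "g \<in> gammaT ?D" for g
    using gammaT_singleton_le[OF that, of y ?Y] by linarith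
  moreover have "\<forall>g\<in>gammaT ?D. unit_valued g" unfolding gammaT_def by blast
  ultimately show ?thesis using clsh_le_ftilde[OF h] \<open>?Y \<noteq> {}\<close> e(1) by blast
qed

lemma loT_ftilde_le_trace_sim:
  assumes f: "f \<in> loT T dA (gammaT (trace_sim_dist T dA d0))"
    and sim: "trace_sim T dA d0 X1 X2 e" and e: "0 \<le> e" "e < 1"
  shows "ftilde f X1 \<le> ftilde f X2 + e"
proof -
  let ?D = "trace_sim_dist T dA d0"
  have f_unit: "unit_valued f" using f loT_unit_valued by blast
  then have fX2: "0 \<le> ftilde f X2 + e" using ftilde_bounds[OF f_unit, of X2] e(1) by simp
  from f consider "f = (\<lambda>_. 1)" | a h where "f = nextop T dA a h" "h \<in> clsh (gammaT ?D)"
    unfolding loT_def by blast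
  then show ?thesis
  proof cases
    case 1
    show ?thesis
    proof (cases "X1 = {}")
      case True
      then show ?thesis using fX2 by (simp add: ftilde_def sup01_def)
    next
      case False
      then obtain x2 where "x2 \<in> X2" using trace_sim_init[OF sim e(2)] by blast
      then have "1 \<le> ftilde f X2" using ftilde_upper[of x2 X2 f] 1 by simp
      then show ?thesis using ftilde_bounds[OF f_unit, of X1] e by simp
    qed
  next
    case (2 a h)
    have h: "unit_valued h" using 2(2) clsh_unit_valued unfolding gammaT_def by blast
    have "f x1 \<le> ftilde f X2 + e" if "x1 \<in> X1" for x1
      unfolding 2(1)
    proof (rule nextop_least)
      fix b y assume "(x1, b, y) \<in> T"
      then have "h y \<le> ftilde h (near_succ T dA X2 b e) + e"
        using clsh_gammaT_le_near_succ[OF 2(2) sim e that] by blast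
      then show "min (1 - dA b a) (h y) \<le> ftilde (nextop T dA a h) X2 + e"
        using nextop_near_succ_le[OF h] e(1) by blast
    qed (use fX2 2(1) in simp)
    then show ?thesis using fX2 by (intro ftilde_least) auto
  qed
qed

lemma betaT_le_trace_sim_dist: "betaT T dA (trace_sim_dist T dA d0) X1 X2 \<le> trace_sim_dist T dA d0 X1 X2"
  unfolding betaT_def
proof (rule alphaT_least)
  let ?F = "loT T dA (gammaT (trace_sim_dist T dA d0))"
  show "\<forall>f\<in>?F. ominus01 (ftilde f X1) (ftilde f X2) \<le> trace_sim_dist T dA d0 X1 X2"
  proof
    fix f assume f: "f \<in> ?F"
    show "ominus01 (ftilde f X1) (ftilde f X2) \<le> trace_sim_dist T dA d0 X1 X2"
    proof (rule trace_sim_dist_greatest)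
      fix e assume "0 \<le> e" "e < 1" "trace_sim T dA d0 X1 X2 e"
      then have "ftilde f X1 \<le> ftilde f X2 + e" using loT_ftilde_le_trace_sim[OF f] by blast
      then show "ominus01 (ftilde f X1) (ftilde f X2) \<le> e"
        using \<open>0 \<le> e\<close> by (simp add: ominus01_def)
    next
      have "unit_valued f" using f loT_unit_valued by blast
      then show "ominus01 (ftilde f X1) (ftilde f X2) \<le> 1" using ominus01_ftilde_bounds by blast
    qed
  qed
  show "0 \<le> trace_sim_dist T dA d0 X1 X2" using trace_sim_dist_bounds by blast
qed

lemma hausdorff_dir_le_trace_sim_dist: "hausdorff_dir d0 X1 X2 \<le> trace_sim_dist T dA d0 X1 X2"
proof (rule trace_sim_dist_greatest)
  fix e assume e: "0 \<le> e" "e < 1" and sim: "trace_sim T dA d0 X1 X2 e"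
  have "inf01 ((\<lambda>v. d0 x1 v) ` X2) \<le> e" if x1: "x1 \<in> X1" for x1
  proof -
    obtain x2 where x2: "x2 \<in> X2" "d0 x1 x2 \<le> e" using trace_sim_init[OF sim e(2) x1] by blast
    have "inf01 ((\<lambda>v. d0 x1 v) ` X2) \<le> d0 x1 x2"
      using x2(1) DPMetD(1)[OF d0] by (intro inf01_lower) auto
    then show ?thesis using x2(2) by linarith
  qed
  then show "hausdorff_dir d0 X1 X2 \<le> e"
    unfolding hausdorff_dir_def using e(1) by (intro sup01_least) auto
next
  show "hausdorff_dir d0 X1 X2 \<le> 1" using hausdorff_dir_bounds[OF d0] by blast
qed

lemma trace_sim_dist_le_beta_d0:
  "trace_sim_dist T dA d0 X1 X2 \<le> beta_d0 T dA d0 (trace_sim_dist T dA d0) X1 X2"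
proof (rule trace_sim_dist_le_approx)
  let ?D = "trace_sim_dist T dA d0"
  let ?m = "beta_d0 T dA d0 ?D X1 X2"
  show m: "0 \<le> ?m" using beta_d0_bounds by blast
  fix e assume e: "?m < e" "e < 1"
  then have "0 < e" using m by linarith
  show "trace_sim T dA d0 X1 X2 e"
  proof (rule trace_simI)
    show "0 \<le> e" using \<open>0 < e\<close> by simp
  next
    fix x1 assume x1: "x1 \<in> X1"
    have "inf01 ((\<lambda>v. d0 x1 v) ` X2) \<le> ?m"
      using hausdorff_dir_upper[OF d0 x1, of X2] by (simp add: beta_d0_def le_max_iff_disj)
    then have "inf01 ((\<lambda>v. d0 x1 v) ` X2) < e" using e(1) by linarith
    then obtain x2 where "x2 \<in> X2" "d0 x1 x2 < e" using inf01_lessD[OF _ less_imp_le[OF e(2)]] by blast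
    then show "\<exists>x2\<in>X2. d0 x1 x2 \<le> e" by (blast intro: less_imp_le)
  next
    fix x1 a y assume x1: "x1 \<in> X1" and tr: "(x1, a, y) \<in> T"
    let ?W = "near_succ T dA X2 a e"
    have "min e (?D {y} ?W) \<le> betaT T dA ?D X1 X2"
      using x1 tr \<open>0 < e\<close> e(2) trace_sim_dist_subset_eq_0
      by (intro betaT_ge_near_succ[OF trace_sim_dist_DPMet trace_sim_dist_eq_sup_singletons]) auto
    also have "\<dots> \<le> ?m" by (simp add: beta_d0_def)
    finally have "?D {y} ?W < e" using e(1) by (simp add: min_def split: if_splits)
    then show "trace_sim T dA d0 {y} ?W e" using e(2) by (intro trace_sim_dist_less) simp_all
  qed
qed

lemma trace_sim_dist_fixpoint: "beta_d0 T dA d0 (trace_sim_dist T dA d0) = trace_sim_dist T dA d0"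
  using trace_sim_dist_le_beta_d0 betaT_le_trace_sim_dist hausdorff_dir_le_trace_sim_dist
  by (intro ext antisym) (simp_all add: beta_d0_def)

lemma tpath_matched_below_fixpoint:
  assumes d: "d \<in> DPMet" "beta_d0 T dA d0 d = d"
    and "tpath T x1 \<sigma> x1'" "x1 \<in> X1" "d X1 X2 < e" "e \<le> 1"
  shows "\<exists>x2\<in>X2. \<exists>x2' \<tau>. tpath T x2 \<tau> x2' \<and> dTr dA \<sigma> \<tau> \<le> e \<and> d0 x1' x2' \<le> e"
proof -
  have pre: "betaT T dA d X W \<le> d X W" "hausdorff_dir d0 X W \<le> d X W" for X W
    using fun_cong[OF fun_cong[OF d(2)], of X W] by (simp_all add: beta_d0_def max_def split: if_splits)
  have sup: "d X W = sup01 ((\<lambda>z. d {z} W) ` X)" for X W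
    using beta_d0_eq_sup_singletons[of d X W] unfolding d(2) .
  have sub0: "d X W = 0" if "X \<subseteq> W" for X W
    using beta_d0_subset_eq_0[OF that, of d] unfolding d(2) .
  show ?thesis
    using assms(3-5)
  proof (induction arbitrary: X1 X2)
    case (tpath_nil x)
    have "inf01 ((\<lambda>v. d0 x v) ` X2) < e"
      using hausdorff_dir_upper[OF d0 tpath_nil(1), of X2] pre(2)[of X1 X2] tpath_nil(2) by linarith
    then obtain x2 where "x2 \<in> X2" "d0 x x2 < e"
      using inf01_lessD assms(6) by force
    moreover have "dTr dA [] [] \<le> e" using DPMetD(1)[OF d(1), of X1 X2] tpath_nil(2) by simp
    ultimately show ?case by (blast intro: tpath.tpath_nil less_imp_le)
  next
    case (tpath_cons x a y \<sigma> z)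
    let ?W = "near_succ T dA X2 a e"
    have "min e (d {y} ?W) \<le> betaT T dA d X1 X2"
      using tpath_cons DPMetD(1)[OF d(1), of X1 X2] assms(6)
      by (intro betaT_ge_near_succ[OF d(1) sup sub0]) auto
    also have "\<dots> \<le> d X1 X2" by (rule pre(1))
    finally have "d {y} ?W < e" using tpath_cons(5) by (simp add: min_def split: if_splits)
    then obtain y2 x2' \<tau> where "y2 \<in> ?W" "tpath T y2 \<tau> x2'" "dTr dA \<sigma> \<tau> \<le> e" "d0 z x2' \<le> e"
      using tpath_cons.IH by blast
    then show ?case using near_succ_tpath_Cons by metis
  qed
qed

lemma trace_sim_dist_le_fixpoint:
  assumes "d \<in> DPMet" "beta_d0 T dA d0 d = d"
  shows "trace_sim_dist T dA d0 \<le> d"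
proof (intro le_funI)
  fix X1 X2
  show "trace_sim_dist T dA d0 X1 X2 \<le> d X1 X2"
    using tpath_matched_below_fixpoint[OF assms] DPMetD(1)[OF assms(1)]
    by (intro trace_sim_dist_le_approx) (auto simp: trace_sim_def)
qed

end

theorem mainTheorem5:
  fixes T :: "('x \<times> 'a \<times> 'x) set" and dA :: "'a \<Rightarrow> 'a \<Rightarrow> real"
    and d0 :: "'x \<Rightarrow> 'x \<Rightarrow> real" and X1 X2 :: "'x set"
  assumes "metric01 dA" and "d0 \<in> DPMet"
  shows "dp_lfp (beta_d0 T dA d0) X1 X2 =
    inf01 {\<epsilon>. 0 \<le> \<epsilon> \<and> \<epsilon> \<le> 1 \<and>
      (\<forall>x1\<in>X1. \<forall>x1' \<sigma>. tpath T x1 \<sigma> x1' \<longrightarrow>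
         (\<exists>x2\<in>X2. \<exists>x2' \<tau>. tpath T x2 \<tau> x2' \<and> dTr dA \<sigma> \<tau> \<le> \<epsilon> \<and> d0 x1' x2' \<le> \<epsilon>))}"
proof -
  interpret metric_ts T dA d0 using assms by unfold_locales
  have "dp_lfp (beta_d0 T dA d0) = trace_sim_dist T dA d0"
    using trace_sim_dist_DPMet trace_sim_dist_fixpoint trace_sim_dist_le_fixpoint by (rule dp_lfp_eqI)
  then show ?thesis by (simp add: trace_sim_dist_def trace_sim_def)
qed

end
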